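(* Let $S$ be an annulus, $(S,M,T)$ a triangulation, $B$ a boundary component of $S$, and $\chi_1,\chi_2$ admissible cuts of $(S,M,T)$ with $\chi_1(B)=\chi_2(B)$. Let $D=\{\triangle:\chi_{1,\triangle}(B)\ne\chi_{2,\triangle}(B)\}$. Then $\#D=2m$ for some $m\in\mathbb{N}$. Further, for each triangle $\triangle\in D$ there is a corresponding triangle $\triangle'$ with $\chi_{1,\triangle}(B)=\chi_{2,\triangle'}(B)$.
   Context: $M$ is a finite set of marked points on $\partial S$ with at least one on each boundary component; $T$ is a triangulation (maximal set of pairwise non-crossing arcs between marked points), dividing $S$ into triangles; internal triangles have no boundary segment as a side. An admissible cut $\chi$ selects one vertex (a marked point) of each internal triangle; each such choice is a local cut. $\chi(B)$ is the number of local cuts of $\chi$ whose marked point lies on $B$, and $\chi_{\triangle}(B)\in\{0,1\}$ is the number of local cuts of $\chi$ contained in the triangle $\triangle$ whose marked point lies on $B$. *)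

theory Defs
  imports Main
begin

text \<open>Triangles are elements of a finite type-variable set Tri; each triangle
  has three corners indexed 0,1,2 (corner t i is the marked point at corner i;
  corners may coincide) and three sides, side i joining corners i and (i+1) mod 3;
  bdry_side t i says that side i of t is a boundary segment.
  bc assigns to each marked point the boundary component it lies on.\<close>

definition marked_annulus_triangulation ::
  "'m set \<Rightarrow> ('m \<Rightarrow> 'b) \<Rightarrow> 't set \<Rightarrow> ('t \<Rightarrow> nat \<Rightarrow> 'm) \<Rightarrow> ('t \<Rightarrow> nat \<Rightarrow> bool) \<Rightarrow> bool"
where
  "marked_annulus_triangulation M bc Tri corner bdry_side \<longleftrightarrow>
     finite M \<and> card (bc ` M) = 2 \<and> finite Tri \<and> Tri \<noteq> {} \<and>
     (\<forall>t\<in>Tri. \<forall>i<3. corner t i \<in> M)"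

definition internal_tri :: "('t \<Rightarrow> nat \<Rightarrow> bool) \<Rightarrow> 't \<Rightarrow> bool" where
  "internal_tri bdry_side t \<longleftrightarrow> (\<forall>i<3. \<not> bdry_side t i)"

definition internal_tris :: "'t set \<Rightarrow> ('t \<Rightarrow> nat \<Rightarrow> bool) \<Rightarrow> 't set" where
  "internal_tris Tri bdry_side = {t\<in>Tri. internal_tri bdry_side t}"

text \<open>An admissible cut selects, for every internal triangle, one of its three
  corners (the local cut), given by its index chi t < 3.\<close>
definition admissible_cut :: "'t set \<Rightarrow> ('t \<Rightarrow> nat \<Rightarrow> bool) \<Rightarrow> ('t \<Rightarrow> nat) \<Rightarrow> bool" where
  "admissible_cut Tri bdry_side chi \<longleftrightarrow> (\<forall>t\<in>internal_tris Tri bdry_side. chi t < 3)"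

text \<open>chi_triangle(B): 1 if the local cut of chi in t lies at a marked point on B, else 0
  (0 for non-internal triangles, which carry no local cut).\<close>
definition cut_tri_count ::
  "('t \<Rightarrow> nat \<Rightarrow> bool) \<Rightarrow> ('t \<Rightarrow> nat \<Rightarrow> 'm) \<Rightarrow> ('m \<Rightarrow> 'b) \<Rightarrow> ('t \<Rightarrow> nat) \<Rightarrow> 'b \<Rightarrow> 't \<Rightarrow> nat"
where
  "cut_tri_count bdry_side corner bc chi B t =
     (if internal_tri bdry_side t \<and> bc (corner t (chi t)) = B then 1 else 0)"

definition cut_count ::
  "'t set \<Rightarrow> ('t \<Rightarrow> nat \<Rightarrow> bool) \<Rightarrow> ('t \<Rightarrow> nat \<Rightarrow> 'm) \<Rightarrow> ('m \<Rightarrow> 'b) \<Rightarrow> ('t \<Rightarrow> nat) \<Rightarrow> 'b \<Rightarrow> nat"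
where
  "cut_count Tri bdry_side corner bc chi B =
     (\<Sum>t\<in>internal_tris Tri bdry_side. cut_tri_count bdry_side corner bc chi B t)"

end

theory Submission
  imports Defs
begin

text \<open>Let \<open>P\<close> and \<open>Q\<close> be the internal triangles whose local cut under \<open>\<chi>\<^sub>1\<close>,
  resp. \<open>\<chi>\<^sub>2\<close>, lies on \<open>B\<close>. Then \<open>D\<close> is the symmetric difference of \<open>P\<close> and \<open>Q\<close>,
  and \<open>\<chi>\<^sub>1(B) = \<chi>\<^sub>2(B)\<close> says \<open>|P| = |Q|\<close>, hence \<open>|P - Q| = |Q - P|\<close>. So \<open>D\<close> has
  even cardinality, and a triangle of \<open>P - Q\<close> (value 1 under \<open>\<chi>\<^sub>1\<close>) is matched by one
  of \<open>Q - P\<close> (value 1 under \<open>\<chi>\<^sub>2\<close>), and vice versa with value 0.\<close>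

lemma card_Diff_swap_eq:
  assumes "finite P" "finite Q" "card P = card Q"
  shows "card (P - Q) = card (Q - P)"
  using assms by (simp add: card_Diff_subset_Int Int_commute)

lemma card_sym_diff_eq:
  assumes "finite P" "finite Q" "card P = card Q"
  shows "card ((P - Q) \<union> (Q - P)) = 2 * card (P - Q)"
  using assms by (simp add: card_Un_disjoint card_Diff_swap_eq[symmetric] Diff_Int_distrib2)

lemma sym_diff_match:
  assumes "finite P" "finite Q" "card P = card Q" "t \<in> (P - Q) \<union> (Q - P)"
  obtains t' where "t' \<in> (P - Q) \<union> (Q - P)" "t' \<in> Q \<longleftrightarrow> t \<in> P"
proof -
  have "card (P - Q) = card (Q - P)"
    using assms(1-3) by (rule card_Diff_swap_eq)
  then have "P - Q = {} \<longleftrightarrow> Q - P = {}"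
    using assms(1,2) by (metis card_0_eq finite_Diff)
  with assms(4) that show ?thesis by blast
qed

definition cut_tris_on ::
  "'t set \<Rightarrow> ('t \<Rightarrow> nat \<Rightarrow> bool) \<Rightarrow> ('t \<Rightarrow> nat \<Rightarrow> 'm) \<Rightarrow> ('m \<Rightarrow> 'b) \<Rightarrow> ('t \<Rightarrow> nat) \<Rightarrow> 'b \<Rightarrow> 't set"
where
  "cut_tris_on Tri bdry_side corner bc chi B =
     {t \<in> internal_tris Tri bdry_side. bc (corner t (chi t)) = B}"

lemma cut_tri_count_eq_of_bool:
  assumes "t \<in> Tri"
  shows "cut_tri_count bdry_side corner bc chi B t
           = of_bool (t \<in> cut_tris_on Tri bdry_side corner bc chi B)"
  using assms by (simp add: cut_tri_count_def cut_tris_on_def internal_tris_def)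

lemma finite_cut_tris_on:
  "finite Tri \<Longrightarrow> finite (cut_tris_on Tri bdry_side corner bc chi B)"
  by (simp add: cut_tris_on_def internal_tris_def)

lemma cut_count_eq_card:
  assumes "finite Tri"
  shows "cut_count Tri bdry_side corner bc chi B = card (cut_tris_on Tri bdry_side corner bc chi B)"
proof -
  have "cut_count Tri bdry_side corner bc chi B
          = (\<Sum>t\<in>internal_tris Tri bdry_side. of_bool (t \<in> cut_tris_on Tri bdry_side corner bc chi B))"
    unfolding cut_count_def
    by (rule sum.cong) (auto simp: cut_tri_count_eq_of_bool internal_tris_def)
  also have "\<dots> = card (cut_tris_on Tri bdry_side corner bc chi B)"
    using assms by (simp add: internal_tris_def cut_tris_on_def Int_def conj_commute)
  finally show ?thesis .
qed

theorem lemma6p11: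
  fixes M :: "'m set" and bc :: "'m \<Rightarrow> 'b" and Tri :: "'t set"
    and corner :: "'t \<Rightarrow> nat \<Rightarrow> 'm" and bdry_side :: "'t \<Rightarrow> nat \<Rightarrow> bool"
    and chi1 chi2 :: "'t \<Rightarrow> nat" and B :: 'b
  assumes "marked_annulus_triangulation M bc Tri corner bdry_side"
    and "B \<in> bc ` M"
    and "admissible_cut Tri bdry_side chi1"
    and "admissible_cut Tri bdry_side chi2"
    and "cut_count Tri bdry_side corner bc chi1 B = cut_count Tri bdry_side corner bc chi2 B"
  defines "D \<equiv> {t \<in> Tri. cut_tri_count bdry_side corner bc chi1 B t
                          \<noteq> cut_tri_count bdry_side corner bc chi2 B t}"
  shows "(\<exists>m::nat. card D = 2 * m) \<and>
         (\<forall>t\<in>D. \<exists>t'\<in>D. cut_tri_count bdry_side corner bc chi1 B t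
                          = cut_tri_count bdry_side corner bc chi2 B t')"
proof -
  define P where "P = cut_tris_on Tri bdry_side corner bc chi1 B"
  define Q where "Q = cut_tris_on Tri bdry_side corner bc chi2 B"
  have "finite Tri"
    using assms(1) by (simp add: marked_annulus_triangulation_def)
  then have fin: "finite P" "finite Q"
    by (simp_all add: P_def Q_def finite_cut_tris_on)
  have card_eq: "card P = card Q"
    using assms(5) \<open>finite Tri\<close> by (simp add: P_def Q_def cut_count_eq_card)
  note count_eq = cut_tri_count_eq_of_bool[of _ Tri]
  have "P \<union> Q \<subseteq> Tri"
    by (auto simp: P_def Q_def cut_tris_on_def internal_tris_def)
  then have D_eq: "D = (P - Q) \<union> (Q - P)"
    by (auto simp: D_def P_def Q_def count_eq)
  have "\<exists>t'\<in>D. cut_tri_count bdry_side corner bc chi1 B t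
                  = cut_tri_count bdry_side corner bc chi2 B t'" if "t \<in> D" for t
  proof -
    obtain t' where t': "t' \<in> D" "t' \<in> Q \<longleftrightarrow> t \<in> P"
      using sym_diff_match[OF fin card_eq] \<open>t \<in> D\<close> unfolding D_eq by metis
    have "t \<in> Tri" "t' \<in> Tri"
      using \<open>t \<in> D\<close> t'(1) by (auto simp: D_def)
    with t' show ?thesis
      by (intro bexI[of _ t']) (simp_all add: P_def Q_def count_eq)
  qed
  moreover have "card D = 2 * card (P - Q)"
    using card_sym_diff_eq[OF fin card_eq] by (simp add: D_eq)
  ultimately show ?thesis by blast
qed

end
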